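(* There is no finite T2R semigroup.
   Context: A semigroup $S$ is a $\Delta$-semigroup if the lattice of all congruences of $S$ is a chain with respect to inclusion. A semigroup $N$ with zero $0$ is nil if every element has some power equal to $0$; non-trivial means having more than one element. A T2R semigroup is a $\Delta$-semigroup $S$ which is the disjoint union of a non-trivial nil ideal $S_0$ (with zero $0$, which is then the zero of $S$) and a subsemigroup $S_1=\{u,v\}$, $u\neq v$, which is a right zero semigroup ($xy=y$ for $x,y\in S_1$). *)

theory Defs
  imports Main
begin

definition semigroup_on :: "'a set \<Rightarrow> ('a \<Rightarrow> 'a \<Rightarrow> 'a) \<Rightarrow> bool" where
  "semigroup_on S m \<longleftrightarrow>
     (\<forall>x\<in>S. \<forall>y\<in>S. m x y \<in> S) \<and>
     (\<forall>x\<in>S. \<forall>y\<in>S. \<forall>z\<in>S. m (m x y) z = m x (m y z))"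

definition congruence_on :: "'a set \<Rightarrow> ('a \<Rightarrow> 'a \<Rightarrow> 'a) \<Rightarrow> 'a rel \<Rightarrow> bool" where
  "congruence_on S m R \<longleftrightarrow> equiv S R \<and>
     (\<forall>a\<in>S. \<forall>b\<in>S. \<forall>c\<in>S. (a, b) \<in> R \<longrightarrow> (m c a, m c b) \<in> R \<and> (m a c, m b c) \<in> R)"

definition delta_semigroup :: "'a set \<Rightarrow> ('a \<Rightarrow> 'a \<Rightarrow> 'a) \<Rightarrow> bool" where
  "delta_semigroup S m \<longleftrightarrow> semigroup_on S m \<and>
     (\<forall>R1 R2. congruence_on S m R1 \<and> congruence_on S m R2 \<longrightarrow> R1 \<subseteq> R2 \<or> R2 \<subseteq> R1)"

text \<open>Positive powers: spow m x n = x^(n+1).\<close>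

fun spow :: "('a \<Rightarrow> 'a \<Rightarrow> 'a) \<Rightarrow> 'a \<Rightarrow> nat \<Rightarrow> 'a" where
  "spow m x 0 = x"
| "spow m x (Suc n) = m x (spow m x n)"

definition nil_with_zero :: "'a set \<Rightarrow> ('a \<Rightarrow> 'a \<Rightarrow> 'a) \<Rightarrow> 'a \<Rightarrow> bool" where
  "nil_with_zero N m z \<longleftrightarrow> z \<in> N \<and>
     (\<forall>x\<in>N. m z x = z \<and> m x z = z) \<and>
     (\<forall>x\<in>N. \<exists>n. spow m x n = z)"

definition ideal_on :: "'a set \<Rightarrow> ('a \<Rightarrow> 'a \<Rightarrow> 'a) \<Rightarrow> 'a set \<Rightarrow> bool" where
  "ideal_on S m I \<longleftrightarrow> I \<subseteq> S \<and> I \<noteq> {} \<and>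
     (\<forall>s\<in>S. \<forall>x\<in>I. m s x \<in> I \<and> m x s \<in> I)"

definition T2R :: "'a set \<Rightarrow> ('a \<Rightarrow> 'a \<Rightarrow> 'a) \<Rightarrow> bool" where
  "T2R S m \<longleftrightarrow> delta_semigroup S m \<and>
     (\<exists>S0 z u v. S = S0 \<union> {u, v} \<and> S0 \<inter> {u, v} = {} \<and> u \<noteq> v \<and>
        ideal_on S m S0 \<and> nil_with_zero S0 m z \<and> (\<exists>x\<in>S0. x \<noteq> z) \<and>
        (\<forall>x\<in>{u, v}. \<forall>y\<in>{u, v}. m x y = y))"

end

theory Submission
  imports Defs
begin

text \<open>
  Since the ideals of a \<open>\<Delta>\<close>-semigroup form a chain and \<open>S\<close> is
  finite, \<open>S\<^sub>0\<close> has a largest proper subideal \<open>M\<close>; it contains \<open>S\<^sub>0\<^sup>2\<close>, which is proper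
  because a finite nil semigroup equal to its own square is trivial. Every \<open>a \<in> S\<^sub>0 - M\<close>
  generates \<open>S\<^sub>0\<close> as an ideal, and as products inside \<open>S\<^sub>0\<close> fall into \<open>M\<close>, all of
  \<open>S\<^sub>0 - M\<close> is reached from \<open>a\<close> by multiplying with \<open>u\<close> and \<open>v\<close>. This forces the
  partition \<open>{M, S\<^sub>0 - M, {u, v}}\<close> to be a congruence. It is incomparable with the Rees
  congruence of \<open>S\<^sub>0\<close>, which separates \<open>u\<close> from \<open>v\<close> but collapses \<open>S\<^sub>0\<close>.
\<close>

definition kernel_rel :: "'a set \<Rightarrow> ('a \<Rightarrow> 'b) \<Rightarrow> 'a rel" where
  "kernel_rel S f = {(a, b). a \<in> S \<and> b \<in> S \<and> f a = f b}"

definition rees_rel :: "'a set \<Rightarrow> 'a set \<Rightarrow> 'a rel" where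
  "rees_rel S I = kernel_rel S (\<lambda>a. if a \<in> I then None else Some a)"

definition principal_ideal :: "'a set \<Rightarrow> ('a \<Rightarrow> 'a \<Rightarrow> 'a) \<Rightarrow> 'a \<Rightarrow> 'a set" where
  "principal_ideal S m a =
     {a} \<union> {m s a |s. s \<in> S} \<union> {m a t |t. t \<in> S} \<union> {m (m s a) t |s t. s \<in> S \<and> t \<in> S}"

lemma kernel_rel_congruence:
  assumes closed: "\<forall>x\<in>S. \<forall>y\<in>S. m x y \<in> S"
    and compat: "\<And>a b c. a \<in> S \<Longrightarrow> b \<in> S \<Longrightarrow> c \<in> S \<Longrightarrow> f a = f b \<Longrightarrow>
                   f (m c a) = f (m c b) \<and> f (m a c) = f (m b c)"
  shows "congruence_on S m (kernel_rel S f)"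
proof -
  have "equiv S (kernel_rel S f)"
    unfolding kernel_rel_def equiv_def refl_on_def sym_def trans_def by auto
  moreover have "(m c a, m c b) \<in> kernel_rel S f \<and> (m a c, m b c) \<in> kernel_rel S f"
    if "a \<in> S" "b \<in> S" "c \<in> S" "(a, b) \<in> kernel_rel S f" for a b c
    using that closed compat[of a b c] unfolding kernel_rel_def by blast
  ultimately show ?thesis
    unfolding congruence_on_def by blast
qed

lemma rees_rel_congruence:
  assumes "semigroup_on S m" and "ideal_on S m I"
  shows "congruence_on S m (rees_rel S I)"
  unfolding rees_rel_def
proof (rule kernel_rel_congruence)
  show "\<forall>x\<in>S. \<forall>y\<in>S. m x y \<in> S"
    using assms(1) unfolding semigroup_on_def by blast
  have I_mult: "\<And>s x. s \<in> S \<Longrightarrow> x \<in> I \<Longrightarrow> m s x \<in> I \<and> m x s \<in> I"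
    using assms(2) unfolding ideal_on_def by blast
  fix a b c
  assume c: "c \<in> S" and "(if a \<in> I then None else Some a) = (if b \<in> I then None else Some b)"
  then consider "a = b" | "a \<in> I" "b \<in> I"
    by (metis option.distinct(1) option.inject)
  then show "(if m c a \<in> I then None else Some (m c a)) = (if m c b \<in> I then None else Some (m c b)) \<and>
      (if m a c \<in> I then None else Some (m a c)) = (if m b c \<in> I then None else Some (m b c))"
    by cases (simp_all add: I_mult c)
qed

lemma rees_rel_subset_imp_subset:
  assumes sub: "rees_rel S I \<subseteq> rees_rel S J" and "I \<subseteq> S" and c: "c \<in> I" "c \<in> J"
  shows "I \<subseteq> J"
proof
  fix a assume "a \<in> I"
  then have "(a, c) \<in> rees_rel S I"
    using assms by (auto simp: rees_rel_def kernel_rel_def)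
  then have "(a, c) \<in> rees_rel S J"
    using sub by blast
  then show "a \<in> J"
    using c by (auto simp: rees_rel_def kernel_rel_def split: if_splits)
qed

lemma ideals_intersect:
  assumes "ideal_on S m I" and "ideal_on S m J"
  shows "I \<inter> J \<noteq> {}"
proof -
  obtain a b where "a \<in> I" "b \<in> J"
    using assms unfolding ideal_on_def by blast
  then have "m a b \<in> I \<inter> J"
    using assms unfolding ideal_on_def by blast
  then show ?thesis by blast
qed

lemma delta_semigroup_ideals_chain:
  assumes "delta_semigroup S m" and I: "ideal_on S m I" and J: "ideal_on S m J"
  shows "I \<subseteq> J \<or> J \<subseteq> I"
proof -
  obtain c where c: "c \<in> I" "c \<in> J"
    using ideals_intersect[OF I J] by blast
  have "rees_rel S I \<subseteq> rees_rel S J \<or> rees_rel S J \<subseteq> rees_rel S I"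
    using assms rees_rel_congruence unfolding delta_semigroup_def by blast
  moreover have "I \<subseteq> S" "J \<subseteq> S"
    using I J unfolding ideal_on_def by blast+
  ultimately show ?thesis
    using rees_rel_subset_imp_subset c by metis
qed

lemma principal_ideal_ideal:
  assumes sg: "semigroup_on S m" and a: "a \<in> S"
  shows "ideal_on S m (principal_ideal S m a)"
proof -
  have closed: "\<And>x y. x \<in> S \<Longrightarrow> y \<in> S \<Longrightarrow> m x y \<in> S"
    and assoc: "\<And>x y w. x \<in> S \<Longrightarrow> y \<in> S \<Longrightarrow> w \<in> S \<Longrightarrow> m (m x y) w = m x (m y w)"
    using sg unfolding semigroup_on_def by blast+
  have "m s y \<in> principal_ideal S m a \<and> m y s \<in> principal_ideal S m a"
    if s: "s \<in> S" and y: "y \<in> principal_ideal S m a" for s y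
  proof -
    from y consider "y = a" | s' where "s' \<in> S" "y = m s' a" | t where "t \<in> S" "y = m a t"
      | s' t where "s' \<in> S" "t \<in> S" "y = m (m s' a) t"
      unfolding principal_ideal_def by blast
    then show ?thesis
    proof cases
      case 1
      then show ?thesis unfolding principal_ideal_def using s by blast
    next
      case (2 s')
      then have "m s y = m (m s s') a" "m s s' \<in> S"
        using assoc closed s a by auto
      then show ?thesis unfolding principal_ideal_def using s 2 by blast
    next
      case (3 t)
      then have "m s y = m (m s a) t" "m y s = m a (m t s)" "m t s \<in> S"
        using assoc closed s a by auto
      then show ?thesis unfolding principal_ideal_def using s 3 by blast
    next
      case (4 s' t)
      then have "m s y = m (m (m s s') a) t" "m y s = m (m s' a) (m t s)"
        and "m s s' \<in> S" "m t s \<in> S"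
        using assoc closed s a by auto
      then show ?thesis unfolding principal_ideal_def using s 4 by blast
    qed
  qed
  moreover have "principal_ideal S m a \<subseteq> S"
    unfolding principal_ideal_def using a closed by blast
  ultimately show ?thesis
    unfolding ideal_on_def principal_ideal_def by blast
qed

lemma principal_ideal_least:
  assumes "ideal_on S m I" and "a \<in> I"
  shows "principal_ideal S m a \<subseteq> I"
  using assms unfolding ideal_on_def principal_ideal_def by blast

lemma spow_closed:
  assumes "\<forall>x\<in>N. \<forall>y\<in>N. m x y \<in> N" and "x \<in> N"
  shows "spow m x n \<in> N"
  using assms by (induction n) auto

lemma nil_fixed_point_eq_zero:
  assumes sg: "semigroup_on N m" and nil: "nil_with_zero N m z"
    and w: "w \<in> N" and y: "y \<in> N" and fixed: "m w y = y"
  shows "y = z"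
proof -
  have closed: "\<forall>x\<in>N. \<forall>y\<in>N. m x y \<in> N"
    using sg unfolding semigroup_on_def by blast
  have powers_fix: "m (spow m w n) y = y" for n
  proof (induction n)
    case (Suc n)
    have "m (spow m w (Suc n)) y = m w (m (spow m w n) y)"
      using sg w y spow_closed[OF closed w] unfolding semigroup_on_def by simp
    then show ?case using Suc fixed by simp
  qed (use fixed in simp)
  obtain n where "spow m w n = z"
    using nil w unfolding nil_with_zero_def by blast
  then show ?thesis
    using powers_fix[of n] nil y unfolding nil_with_zero_def by simp
qed

lemma finite_trans_has_loop:
  assumes "finite A" and "A \<noteq> {}" and "trans r" and "r \<subseteq> A \<times> A"
    and pred: "\<forall>x\<in>A. \<exists>y\<in>A. (y, x) \<in> r"
  shows "\<exists>y\<in>A. (y, y) \<in> r"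
proof (rule ccontr)
  assume "\<not> ?thesis"
  then have "irrefl r"
    using assms(4) unfolding irrefl_def by blast
  then have "acyclic r"
    using assms(3) by (simp add: acyclic_irrefl trancl_id)
  moreover have "finite r"
    using assms(1,4) by (meson finite_SigmaI finite_subset)
  ultimately have "wf r"
    by (simp add: finite_acyclic_wf)
  then obtain y where "y \<in> A" "\<And>x. (x, y) \<in> r \<Longrightarrow> x \<notin> A"
    using assms(2) by (meson wfE_min ex_in_conv)
  then show False
    using pred by blast
qed

text \<open>
  If every element is a product, then \<open>t\<close> has left factors \<open>t = w\<^sub>1 t\<^sub>1\<close>,
  \<open>t\<^sub>1 = w\<^sub>2 t\<^sub>2\<close>, \<dots>; by finiteness some right factor \<open>y\<close> of \<open>t\<close> satisfies \<open>y = w y\<close>.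
\<close>

lemma finite_nil_semigroup_eq_square_trivial:
  assumes fin: "finite N" and sg: "semigroup_on N m" and nil: "nil_with_zero N m z"
    and square: "\<forall>x\<in>N. \<exists>a\<in>N. \<exists>b\<in>N. x = m a b" and t: "t \<in> N"
  shows "t = z"
proof -
  have closed: "\<And>x y. x \<in> N \<Longrightarrow> y \<in> N \<Longrightarrow> m x y \<in> N"
    and assoc: "\<And>x y w. x \<in> N \<Longrightarrow> y \<in> N \<Longrightarrow> w \<in> N \<Longrightarrow> m (m x y) w = m x (m y w)"
    using sg unfolding semigroup_on_def by blast+
  define B where "B = {y \<in> N. \<exists>w\<in>N. t = m w y}"
  define r where "r = {(y, x). y \<in> B \<and> x \<in> B \<and> (\<exists>w\<in>N. x = m w y)}"
  have "trans r"
  proof (rule transI)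
    fix y x x' assume "(y, x) \<in> r" "(x, x') \<in> r"
    then obtain w w' where "w \<in> N" "w' \<in> N" "x = m w y" "x' = m w' x" "y \<in> B" "x' \<in> B"
      unfolding r_def by blast
    then have "x' = m (m w' w) y" "m w' w \<in> N"
      using assoc closed B_def by auto
    then show "(y, x') \<in> r"
      unfolding r_def using \<open>y \<in> B\<close> \<open>x' \<in> B\<close> by blast
  qed
  moreover have "\<forall>x\<in>B. \<exists>y\<in>B. (y, x) \<in> r"
  proof
    fix x assume x: "x \<in> B"
    obtain w where w: "w \<in> N" "t = m w x" "x \<in> N"
      using x B_def by blast
    obtain a b where ab: "a \<in> N" "b \<in> N" "x = m a b"
      using square w(3) by blast
    then have "t = m (m w a) b" "m w a \<in> N"
      using w assoc closed by auto
    then have "b \<in> B"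
      using ab B_def by blast
    then show "\<exists>y\<in>B. (y, x) \<in> r"
      unfolding r_def using x ab by blast
  qed
  moreover have "B \<noteq> {}"
    using square t unfolding B_def by blast
  moreover have "finite B" "r \<subseteq> B \<times> B"
    using fin unfolding B_def r_def by auto
  ultimately obtain y where y: "y \<in> B" "(y, y) \<in> r"
    using finite_trans_has_loop by blast
  then obtain w where "w \<in> N" "y \<in> N" "m w y = y"
    unfolding r_def B_def by auto
  then have "y = z"
    using nil_fixed_point_eq_zero[OF sg nil] by blast
  moreover obtain w' where "w' \<in> N" "t = m w' y"
    using y(1) B_def by blast
  ultimately show ?thesis
    using nil unfolding nil_with_zero_def by auto
qed

locale finite_t2r =
  fixes S :: "'a set" and m :: "'a \<Rightarrow> 'a \<Rightarrow> 'a" and S0 :: "'a set" and z u v :: 'a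
  assumes finite: "finite S"
    and delta: "delta_semigroup S m"
    and carrier: "S = S0 \<union> {u, v}" and disjoint: "S0 \<inter> {u, v} = {}" and distinct: "u \<noteq> v"
    and S0_ideal: "ideal_on S m S0" and nil: "nil_with_zero S0 m z"
    and nontrivial: "\<exists>x\<in>S0. x \<noteq> z"
    and right_zero: "\<forall>x\<in>{u, v}. \<forall>y\<in>{u, v}. m x y = y"
begin

lemma semigroup: "semigroup_on S m"
  using delta unfolding delta_semigroup_def by blast

lemma mult_closed: "x \<in> S \<Longrightarrow> y \<in> S \<Longrightarrow> m x y \<in> S"
  using semigroup unfolding semigroup_on_def by blast

lemma assoc: "x \<in> S \<Longrightarrow> y \<in> S \<Longrightarrow> w \<in> S \<Longrightarrow> m (m x y) w = m x (m y w)"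
  using semigroup unfolding semigroup_on_def by blast

lemma S0_subset: "S0 \<subseteq> S"
  and uv_in_S: "w \<in> {u, v} \<Longrightarrow> w \<in> S"
  and uv_notin_S0: "w \<in> {u, v} \<Longrightarrow> w \<notin> S0"
  and S_cases: "x \<in> S \<Longrightarrow> x \<in> S0 \<or> x \<in> {u, v}"
  using carrier disjoint by auto

lemma S0_mult: "s \<in> S \<Longrightarrow> x \<in> S0 \<Longrightarrow> m s x \<in> S0"
  and S0_mult': "s \<in> S \<Longrightarrow> x \<in> S0 \<Longrightarrow> m x s \<in> S0"
  using S0_ideal unfolding ideal_on_def by auto

lemma uv_mult: "w \<in> {u, v} \<Longrightarrow> w' \<in> {u, v} \<Longrightarrow> m w w' = w'"
  using right_zero by blast

lemma S0_semigroup: "semigroup_on S0 m"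
  using semigroup S0_subset S0_mult unfolding semigroup_on_def by blast

lemma square_psubset: "{m a b |a b. a \<in> S0 \<and> b \<in> S0} \<subset> S0"
proof -
  have "{m a b |a b. a \<in> S0 \<and> b \<in> S0} \<subseteq> S0"
    using S0_mult S0_subset by blast
  moreover have "{m a b |a b. a \<in> S0 \<and> b \<in> S0} \<noteq> S0"
  proof
    assume "{m a b |a b. a \<in> S0 \<and> b \<in> S0} = S0"
    then have "\<forall>x\<in>S0. \<exists>a\<in>S0. \<exists>b\<in>S0. x = m a b"
      by blast
    then have "x = z" if "x \<in> S0" for x
      using finite_nil_semigroup_eq_square_trivial[OF _ S0_semigroup nil _ that]
        finite_subset[OF S0_subset finite] by blast
    then show False
      using nontrivial by blast
  qed
  ultimately show ?thesis
    by blast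
qed

lemma square_ideal: "ideal_on S m {m a b |a b. a \<in> S0 \<and> b \<in> S0}"
  unfolding ideal_on_def
proof (intro conjI ballI)
  show "{m a b |a b. a \<in> S0 \<and> b \<in> S0} \<subseteq> S"
    using S0_mult S0_subset by blast
  show "{m a b |a b. a \<in> S0 \<and> b \<in> S0} \<noteq> {}"
    using nil unfolding nil_with_zero_def by blast
  fix s x assume s: "s \<in> S" and "x \<in> {m a b |a b. a \<in> S0 \<and> b \<in> S0}"
  then obtain a b where ab: "a \<in> S0" "b \<in> S0" "x = m a b"
    by blast
  moreover have "a \<in> S" "b \<in> S"
    using ab S0_subset by auto
  ultimately have "m s x = m (m s a) b" "m x s = m a (m b s)"
    using assoc s by auto
  moreover have "m s a \<in> S0" "m b s \<in> S0"
    using S0_mult S0_mult' s ab by auto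
  ultimately show "m s x \<in> {m a b |a b. a \<in> S0 \<and> b \<in> S0}"
    and "m x s \<in> {m a b |a b. a \<in> S0 \<and> b \<in> S0}"
    using ab by blast+
qed

lemma ex_greatest_proper_subideal:
  "\<exists>M. ideal_on S m M \<and> M \<subset> S0 \<and> (\<forall>I. ideal_on S m I \<and> I \<subset> S0 \<longrightarrow> I \<subseteq> M)"
proof -
  let ?F = "{I. ideal_on S m I \<and> I \<subset> S0}"
  have "?F \<subseteq> Pow S"
    unfolding ideal_on_def by auto
  then have fin: "finite ?F"
    by (rule finite_subset) (simp add: finite)
  have "?F \<noteq> {}"
    using square_ideal square_psubset by blast
  then obtain M where M: "M \<in> ?F" and maximal: "\<And>I. I \<in> ?F \<Longrightarrow> M \<subseteq> I \<Longrightarrow> M = I"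
    using finite_has_maximal[OF fin] by auto
  have "I \<subseteq> M" if I: "I \<in> ?F" for I
  proof -
    have "I \<subseteq> M \<or> M \<subseteq> I"
      using delta_semigroup_ideals_chain[OF delta] M I by blast
    then show ?thesis
      using maximal[OF I] by blast
  qed
  then show ?thesis
    using M by blast
qed

definition left_fixed :: "'a \<Rightarrow> bool" where
  "left_fixed x \<longleftrightarrow> (\<forall>w\<in>{u, v}. m w x = x)"

lemma left_fixed_uv_mult: "w \<in> {u, v} \<Longrightarrow> x \<in> S \<Longrightarrow> left_fixed (m w x)"
  unfolding left_fixed_def using assoc uv_in_S uv_mult by metis

lemma left_fixed_mult: "left_fixed x \<Longrightarrow> x \<in> S \<Longrightarrow> t \<in> S \<Longrightarrow> left_fixed (m x t)"
  unfolding left_fixed_def using assoc uv_in_S by metis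

end

locale finite_t2r_greatest_subideal = finite_t2r +
  fixes M :: "'a set"
  assumes M_ideal: "ideal_on S m M" and M_proper: "M \<subset> S0"
    and M_greatest: "\<And>I. ideal_on S m I \<Longrightarrow> I \<subset> S0 \<Longrightarrow> I \<subseteq> M"
begin

lemma M_mult: "s \<in> S \<Longrightarrow> x \<in> M \<Longrightarrow> m s x \<in> M"
  and M_mult': "s \<in> S \<Longrightarrow> x \<in> M \<Longrightarrow> m x s \<in> M"
  using M_ideal unfolding ideal_on_def by auto

lemma S0_products_in_M: "a \<in> S0 \<Longrightarrow> b \<in> S0 \<Longrightarrow> m a b \<in> M"
  using M_greatest[OF square_ideal square_psubset] by blast

lemma principal_ideal_outside_M:
  assumes "a \<in> S0" and "a \<notin> M"
  shows "principal_ideal S m a = S0"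
proof (rule ccontr)
  assume "principal_ideal S m a \<noteq> S0"
  moreover have "principal_ideal S m a \<subseteq> S0"
    using principal_ideal_least[OF S0_ideal assms(1)] .
  moreover have "ideal_on S m (principal_ideal S m a)"
    using principal_ideal_ideal[OF semigroup] assms(1) S0_subset by blast
  ultimately have "principal_ideal S m a \<subseteq> M"
    using M_greatest by blast
  moreover have "a \<in> principal_ideal S m a"
    unfolding principal_ideal_def by blast
  ultimately show False
    using assms(2) by blast
qed

lemma left_factor_uv:
  "s \<in> S \<Longrightarrow> x \<in> S0 \<Longrightarrow> m s x \<notin> M \<Longrightarrow> s \<in> {u, v}"
  using S_cases S0_products_in_M by blast

lemma right_factor_uv:
  "t \<in> S \<Longrightarrow> x \<in> S0 \<Longrightarrow> m x t \<notin> M \<Longrightarrow> t \<in> {u, v}"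
  using S_cases S0_products_in_M by blast

lemma outside_M_cases:
  assumes a: "a \<in> S0" "a \<notin> M" and y: "y \<in> S0" "y \<notin> M"
  obtains "y = a"
    | w where "w \<in> {u, v}" "y = m w a"
    | t where "t \<in> {u, v}" "y = m a t"
    | w t where "w \<in> {u, v}" "t \<in> {u, v}" "y = m (m w a) t"
proof -
  have "y \<in> principal_ideal S m a"
    using principal_ideal_outside_M[OF a] y by blast
  then consider "y = a" | s where "s \<in> S" "y = m s a" | t where "t \<in> S" "y = m a t"
    | s t where "s \<in> S" "t \<in> S" "y = m (m s a) t"
    unfolding principal_ideal_def by blast
  then show thesis
  proof cases
    case (2 s)
    then show thesis
      using that(2) left_factor_uv a(1) y(2) by blast
  next
    case (3 t)
    then show thesis
      using that(3) right_factor_uv a(1) y(2) by blast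
  next
    case (4 s t)
    have "t \<in> {u, v}"
      using right_factor_uv[OF 4(2) S0_mult[OF 4(1) a(1)]] 4(3) y(2) by simp
    moreover have "y = m s (m a t)"
      using assoc[OF 4(1) _ 4(2)] 4(3) a(1) S0_subset by blast
    then have "s \<in> {u, v}"
      using left_factor_uv[OF 4(1) S0_mult'[OF 4(2) a(1)]] y(2) by simp
    ultimately show thesis
      using that(4) 4(3) by blast
  qed (rule that(1))
qed

lemma left_fixed_if_uv_mult_outside_M:
  assumes w: "w \<in> {u, v}" and c: "c \<in> S0" and outside: "m w c \<notin> M"
  shows "left_fixed c"
proof -
  let ?a = "m w c"
  have cS: "c \<in> S" and a: "?a \<in> S0" "?a \<in> S"
    using c S0_subset S0_mult uv_in_S[OF w] by auto
  have lf: "left_fixed ?a"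
    using left_fixed_uv_mult[OF w cS] .
  have cM: "c \<notin> M"
    using M_mult uv_in_S[OF w] outside by blast
  show ?thesis
  proof (cases rule: outside_M_cases[OF a(1) outside c cM])
    case (2 w')
    then show ?thesis
      using left_fixed_uv_mult[OF 2(1) a(2)] by metis
  next
    case (3 t)
    then show ?thesis
      using left_fixed_mult[OF lf a(2) uv_in_S[OF 3(1)]] by metis
  next
    case (4 w' t)
    then show ?thesis
      using left_fixed_mult[OF left_fixed_uv_mult[OF 4(1) a(2)] _ uv_in_S[OF 4(2)]]
        uv_in_S[OF 4(1)] a(2) mult_closed by metis
  qed (use lf in metis)
qed

lemma outside_M_right_multiple:
  assumes x: "x \<in> S0" "x \<notin> M" and y: "y \<in> S0" "y \<notin> M"
  shows "y = x \<or> (\<exists>t\<in>{u, v}. y = m x t)"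
proof (cases rule: outside_M_cases[OF x y])
  case (2 w)
  then have "m w x \<notin> M"
    using y(2) by simp
  then have "left_fixed x"
    using left_fixed_if_uv_mult_outside_M[OF 2(1) x(1)] by blast
  then show ?thesis
    using 2 unfolding left_fixed_def by auto
next
  case (4 w t)
  have xt: "m x t \<in> S0"
    using S0_mult' uv_in_S[OF 4(2)] x(1) by blast
  have y_eq: "y = m w (m x t)"
    using 4 assoc uv_in_S x(1) S0_subset by auto
  then have "m w (m x t) \<notin> M"
    using y(2) by simp
  then have "left_fixed (m x t)"
    using left_fixed_if_uv_mult_outside_M[OF 4(1) xt] by blast
  then show ?thesis
    using 4(1,2) y_eq unfolding left_fixed_def by auto
qed auto

lemma uv_mult_in_M_iff:
  assumes x: "x \<in> S0" "x \<notin> M" and y: "y \<in> S0" "y \<notin> M" and s: "s \<in> {u, v}"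
  shows "m s x \<in> M \<longleftrightarrow> m s y \<in> M"
proof -
  have "m s y' \<notin> M"
    if x': "x' \<in> S0" "x' \<notin> M" and y': "y' \<in> S0" "y' \<notin> M" and outside: "m s x' \<notin> M"
    for x' y'
  proof -
    have lf: "left_fixed x'"
      using left_fixed_if_uv_mult_outside_M[OF s x'(1) outside] .
    have "left_fixed y'"
      using outside_M_right_multiple[OF x' y']
    proof
      assume "\<exists>t\<in>{u, v}. y' = m x' t"
      then show "left_fixed y'"
        using left_fixed_mult[OF lf] uv_in_S x'(1) S0_subset by blast
    qed (use lf in simp)
    then show ?thesis
      using s y'(2) unfolding left_fixed_def by auto
  qed
  then show ?thesis
    using x y by blast
qed

lemma outside_M_mult_uv_eq:
  assumes x: "x \<in> S0" "x \<notin> M" and y: "y \<in> S0" "y \<notin> M" and s: "s \<in> {u, v}"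
  shows "m y s = m x s"
  using outside_M_right_multiple[OF x y]
proof
  assume "\<exists>t\<in>{u, v}. y = m x t"
  then obtain t where t: "t \<in> {u, v}" "y = m x t"
    by blast
  have "m (m x t) s = m x (m t s)"
    using assoc[OF _ uv_in_S[OF t(1)] uv_in_S[OF s]] x(1) S0_subset by blast
  then show ?thesis
    using t uv_mult s by simp
qed simp

lemma mult_u_in_M_iff_mult_v:
  assumes c: "c \<in> S"
  shows "m c u \<in> M \<longleftrightarrow> m c v \<in> M"
proof -
  have u: "u \<in> S" and v: "v \<in> S"
    using uv_in_S by auto
  have "m (m c u) v = m c v" "m (m c v) u = m c u"
    using assoc[OF c u v] assoc[OF c v u] uv_mult by auto
  then show ?thesis
    using M_mult' u v by metis
qed

lemma u_mult_in_M_iff_v_mult: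
  assumes c: "c \<in> S0"
  shows "m u c \<in> M \<longleftrightarrow> m v c \<in> M"
proof -
  have "m u c = m v c" if "w \<in> {u, v}" "m w c \<notin> M" for w
  proof -
    have "left_fixed c"
      using left_fixed_if_uv_mult_outside_M[OF that(1) c that(2)] .
    then show ?thesis
      unfolding left_fixed_def by simp
  qed
  from this[of u] this[of v] show ?thesis
    by (metis insertCI)
qed

definition level :: "'a \<Rightarrow> nat" where
  "level x = (if x \<in> M then 0 else if x \<in> S0 then 1 else 2)"

lemma level_cases:
  assumes "a \<in> S" "b \<in> S" "level a = level b"
  obtains "a \<in> M" "b \<in> M"
    | "a \<in> S0" "a \<notin> M" "b \<in> S0" "b \<notin> M"
    | "a \<in> {u, v}" "b \<in> {u, v}"
  using assms S_cases M_proper unfolding level_def by (auto split: if_splits)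

lemma level_S0: "x \<in> S0 \<Longrightarrow> level x = (if x \<in> M then 0 else 1)"
  unfolding level_def by simp

lemma level_left_compat:
  assumes a: "a \<in> S" and b: "b \<in> S" and c: "c \<in> S" and eq: "level a = level b"
  shows "level (m c a) = level (m c b)"
proof (cases rule: level_cases[OF a b eq])
  case 1
  then show ?thesis
    using M_mult c by (simp add: level_def)
next
  case 2
  then have "m c a \<in> S0" "m c b \<in> S0"
    using S0_mult c by auto
  moreover have "m c a \<in> M \<longleftrightarrow> m c b \<in> M"
  proof (cases "c \<in> S0")
    case True
    then show ?thesis
      using S0_products_in_M 2 by blast
  next
    case False
    then show ?thesis
      using S_cases[OF c] uv_mult_in_M_iff 2 by blast
  qed
  ultimately show ?thesis
    by (simp add: level_S0)
next
  case 3
  show ?thesis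
  proof (cases "c \<in> S0")
    case True
    then have "m c a \<in> S0" "m c b \<in> S0"
      using S0_mult' a b by auto
    moreover have "m c a \<in> M \<longleftrightarrow> m c b \<in> M"
      using mult_u_in_M_iff_mult_v[OF c] 3 by auto
    ultimately show ?thesis
      by (simp add: level_S0)
  next
    case False
    then have "m c a = a" "m c b = b"
      using S_cases[OF c] uv_mult 3 by auto
    then show ?thesis
      using eq by simp
  qed
qed

lemma level_right_compat:
  assumes a: "a \<in> S" and b: "b \<in> S" and c: "c \<in> S" and eq: "level a = level b"
  shows "level (m a c) = level (m b c)"
proof (cases rule: level_cases[OF a b eq])
  case 1
  then show ?thesis
    using M_mult' c by (simp add: level_def)
next
  case 2
  show ?thesis
  proof (cases "c \<in> S0")
    case True
    then have "m a c \<in> M" "m b c \<in> M"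
      using S0_products_in_M 2 by auto
    then show ?thesis
      by (simp add: level_def)
  next
    case False
    then have "m b c = m a c"
      using S_cases[OF c] outside_M_mult_uv_eq 2 by blast
    then show ?thesis
      by simp
  qed
next
  case 3
  show ?thesis
  proof (cases "c \<in> S0")
    case True
    then have "m a c \<in> S0" "m b c \<in> S0"
      using S0_mult a b by auto
    moreover have "m a c \<in> M \<longleftrightarrow> m b c \<in> M"
      using u_mult_in_M_iff_v_mult[OF True] 3 by auto
    ultimately show ?thesis
      by (simp add: level_S0)
  next
    case False
    then have "m a c = c" "m b c = c"
      using S_cases[OF c] uv_mult 3 by auto
    then show ?thesis
      by simp
  qed
qed

lemma level_congruence: "congruence_on S m (kernel_rel S level)"
proof (rule kernel_rel_congruence)
  show "\<forall>x\<in>S. \<forall>y\<in>S. m x y \<in> S"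
    using mult_closed by blast
qed (use level_left_compat level_right_compat in blast)

lemma rees_S0_not_subset_level: "\<not> rees_rel S S0 \<subseteq> kernel_rel S level"
proof -
  obtain x y where x: "x \<in> S0" "x \<notin> M" and y: "y \<in> M"
    using M_proper M_ideal unfolding ideal_on_def by blast
  then have "y \<in> S0"
    using M_proper by blast
  then have "(x, y) \<in> rees_rel S S0" "level x \<noteq> level y"
    using x y S0_subset by (auto simp: rees_rel_def kernel_rel_def level_def)
  then show ?thesis
    unfolding kernel_rel_def by blast
qed

lemma level_not_subset_rees_S0: "\<not> kernel_rel S level \<subseteq> rees_rel S S0"
proof -
  have "level u = level v"
    using uv_notin_S0 M_proper unfolding level_def by auto
  then have "(u, v) \<in> kernel_rel S level"
    using uv_in_S unfolding kernel_rel_def by blast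
  moreover have "(u, v) \<notin> rees_rel S S0"
    using uv_notin_S0 distinct unfolding rees_rel_def kernel_rel_def by auto
  ultimately show ?thesis
    by blast
qed

end

lemma (in finite_t2r) impossible: False
proof -
  obtain M where "ideal_on S m M" "M \<subset> S0" "\<And>I. ideal_on S m I \<Longrightarrow> I \<subset> S0 \<Longrightarrow> I \<subseteq> M"
    using ex_greatest_proper_subideal by blast
  then interpret finite_t2r_greatest_subideal S m S0 z u v M
    by unfold_locales
  have "rees_rel S S0 \<subseteq> kernel_rel S level \<or> kernel_rel S level \<subseteq> rees_rel S S0"
    using delta rees_rel_congruence[OF semigroup S0_ideal] level_congruence
    unfolding delta_semigroup_def by blast
  then show False
    using rees_S0_not_subset_level level_not_subset_rees_S0 by blast
qed

theorem mainTheorem8: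
  fixes S :: "'a set" and m :: "'a \<Rightarrow> 'a \<Rightarrow> 'a"
  assumes "finite S"
  shows "\<not> T2R S m"
proof
  assume "T2R S m"
  then obtain S0 z u v where "delta_semigroup S m"
    and "S = S0 \<union> {u, v}" "S0 \<inter> {u, v} = {}" "u \<noteq> v"
    and "ideal_on S m S0" "nil_with_zero S0 m z" "\<exists>x\<in>S0. x \<noteq> z"
    and "\<forall>x\<in>{u, v}. \<forall>y\<in>{u, v}. m x y = y"
    unfolding T2R_def by blast
  then have "finite_t2r S m S0 z u v"
    using assms by (intro finite_t2r.intro)
  then show False
    by (rule finite_t2r.impossible)
qed

end
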